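(* Let $G$ be a connected weighted multigraph on the vertex set $V$, $|V|=n\ge2$, with positive edge weights and Laplacian matrix $L$, and let $d^r$ be the resistance distance on $V$. Then for all distinct $i,j\in V$, $$d^r(i,j)=n^{-1}\bigl((L_{jj})^{-1}_i+(L_{ii})^{-1}_j\bigr)\mathbf 1,$$ where $\mathbf 1$ is the vector of $n-1$ ones and $(L_{jj})^{-1}_i$ is the row indexed by $i$ of the inverse of the principal submatrix $L_{jj}$.
   Context: Loops and multiple edges are allowed. The weighted adjacency matrix $A=(a_{ij})$ has $a_{ij}$ equal to the sum of weights of the edges joining $i$ and $j$; $L=\operatorname{diag}(A\mathbf 1)-A$. $L_{jj}$ is $L$ with row $j$ and column $j$ deleted (indexed by $V\setminus\{j\}$). The resistance distance is $d^r(i,j)=(e_i-e_j)^{\mathsf T}L^{+}(e_i-e_j)$ with $L^+$ the Moore–Penrose inverse (the effective resistance with edge conductances equal to the weights). *)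

theory Defs
  imports "HOL-Analysis.Analysis"
begin

text \<open>A weighted multigraph on the finite vertex type 'v (vertex set V = UNIV):
  a finite set E of edge identifiers, each edge e has an endpoint set ends e
  (one vertex for a loop, two for an ordinary edge) and a weight w e.\<close>

definition is_weighted_multigraph ::
  "'e set \<Rightarrow> ('e \<Rightarrow> 'v set) \<Rightarrow> ('e \<Rightarrow> real) \<Rightarrow> bool" where
  "is_weighted_multigraph E ends w \<longleftrightarrow>
     finite E \<and> (\<forall>e\<in>E. card (ends e) = 1 \<or> card (ends e) = 2)"

definition wadj :: "'e set \<Rightarrow> ('e \<Rightarrow> 'v set) \<Rightarrow> ('e \<Rightarrow> real) \<Rightarrow> 'v \<Rightarrow> 'v \<Rightarrow> real" where
  "wadj E ends w i j = (\<Sum>e\<in>{e\<in>E. ends e = {i, j}}. w e)"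

definition laplacian ::
  "'e set \<Rightarrow> ('e \<Rightarrow> 'v::finite set) \<Rightarrow> ('e \<Rightarrow> real) \<Rightarrow> real^'v^'v" where
  "laplacian E ends w =
     (\<chi> i j. (if i = j then (\<Sum>k\<in>UNIV. wadj E ends w i k) else 0) - wadj E ends w i j)"

definition mg_connected :: "'e set \<Rightarrow> ('e \<Rightarrow> 'v set) \<Rightarrow> bool" where
  "mg_connected E ends \<longleftrightarrow>
     (\<forall>u v. (u, v) \<in> {(x, y). \<exists>e\<in>E. ends e = {x, y}}\<^sup>*)"

definition moore_penrose :: "real^'n^'n \<Rightarrow> real^'n^'n" where
  "moore_penrose M = (THE X. M ** X ** M = M \<and> X ** M ** X = X \<and>
       transpose (M ** X) = M ** X \<and> transpose (X ** M) = X ** M)"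

definition resistance_distance ::
  "'e set \<Rightarrow> ('e \<Rightarrow> 'v::finite set) \<Rightarrow> ('e \<Rightarrow> real) \<Rightarrow> 'v \<Rightarrow> 'v \<Rightarrow> real" where
  "resistance_distance E ends w i j =
     (let x = axis i (1::real) - axis j 1
      in x \<bullet> (moore_penrose (laplacian E ends w) *v x))"

text \<open>The principal submatrix L_jj is L restricted to S = V - {j}; its inverse
  is the matrix N on S with M N = N M = I on S (set to 0 outside S).\<close>
definition principal_submatrix :: "real^'v^'v \<Rightarrow> 'v \<Rightarrow> 'v \<Rightarrow> 'v \<Rightarrow> real" where
  "principal_submatrix M j a b = (if a \<noteq> j \<and> b \<noteq> j then M $ a $ b else 0)"

definition is_inverse_on :: "'v set \<Rightarrow> ('v \<Rightarrow> 'v \<Rightarrow> real) \<Rightarrow> ('v \<Rightarrow> 'v \<Rightarrow> real) \<Rightarrow> bool" where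
  "is_inverse_on S M N \<longleftrightarrow>
     (\<forall>a\<in>S. \<forall>b\<in>S. (\<Sum>k\<in>S. M a k * N k b) = (if a = b then 1 else 0)
                  \<and> (\<Sum>k\<in>S. N a k * M k b) = (if a = b then 1 else 0))"

definition inverse_on :: "'v set \<Rightarrow> ('v \<Rightarrow> 'v \<Rightarrow> real) \<Rightarrow> 'v \<Rightarrow> 'v \<Rightarrow> real" where
  "inverse_on S M = (THE N. is_inverse_on S M N \<and> (\<forall>a b. a \<notin> S \<or> b \<notin> S \<longrightarrow> N a b = 0))"

definition principal_sub_inverse :: "real^'v^'v \<Rightarrow> 'v::finite \<Rightarrow> 'v \<Rightarrow> 'v \<Rightarrow> real" where
  "principal_sub_inverse M j = inverse_on (UNIV - {j}) (principal_submatrix M j)"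

end

theory Submission
  imports Defs
begin

text \<open>Let J be the all-ones matrix and n the number of vertices. The Laplacian L is symmetric
  with zero row sums, so L J = J L = 0, and for a connected graph with positive weights its
  kernel consists of the constant vectors; hence L + J is invertible. Its inverse H satisfies
  H J = J H = J/n and L H = H L = I - J/n, from which the Moore-Penrose inverse of L is
  H - J/n^2, so the resistance distance is H(i,i) - H(i,j) - H(j,i) + H(j,j). On the other hand
  the inverse of the principal submatrix L_tt has entries H(a,b) - H(t,b) - H(a,t) + H(t,t),
  whose row sums are n (H(t,t) - H(a,t)). Adding the two row sums of the statement gives
  n times the resistance distance.\<close>

lemma matrix_add_rdistrib: "(A + B) ** C = A ** C + B ** (C :: 'a::semiring_1^'p^'n)"
  by (vector matrix_matrix_mult_def sum.distrib[symmetric] field_simps)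

lemma matrix_diff_ldistrib: "A ** (B - C) = A ** B - A ** (C :: 'a::ring_1^'p^'n)"
  by (vector matrix_matrix_mult_def sum_subtractf[symmetric] field_simps)

lemma matrix_diff_rdistrib: "(A - B) ** C = A ** C - B ** (C :: 'a::ring_1^'p^'n)"
  by (vector matrix_matrix_mult_def sum_subtractf[symmetric] field_simps)

definition ones_mat :: "real^'n^'n" where
  "ones_mat = (\<chi> a b. 1)"

lemma ones_mat_mult_ones_mat: "ones_mat ** ones_mat = real CARD('n) *\<^sub>R (ones_mat :: real^'n^'n)"
  by (simp add: vec_eq_iff matrix_matrix_mult_def ones_mat_def)

lemma mult_ones_mat_eq_0_iff: "A ** ones_mat = 0 \<longleftrightarrow> (\<forall>a. (\<Sum>b\<in>UNIV. A$a$b) = 0)"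
  by (simp add: vec_eq_iff matrix_matrix_mult_def ones_mat_def)

lemma ones_mat_mult_eq_0_iff: "ones_mat ** A = 0 \<longleftrightarrow> (\<forall>b. (\<Sum>a\<in>UNIV. A$a$b) = 0)"
  by (simp add: vec_eq_iff matrix_matrix_mult_def ones_mat_def)

lemma inverse_plus_ones_mat:
  fixes L H :: "real^'n^'n"
  defines "c \<equiv> 1 / real CARD('n)"
  assumes LJ: "L ** ones_mat = 0" and JL: "ones_mat ** L = 0"
    and inv: "H ** (L + ones_mat) = mat 1"
  shows "H ** ones_mat = c *\<^sub>R ones_mat" and "ones_mat ** H = c *\<^sub>R ones_mat"
    and "H ** L = mat 1 - c *\<^sub>R ones_mat" and "L ** H = mat 1 - c *\<^sub>R ones_mat"
proof -
  have inv': "(L + ones_mat) ** H = mat 1"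
    using inv matrix_left_right_inverse by blast
  have unscale: "X = c *\<^sub>R M" if "M = real CARD('n) *\<^sub>R X" for M X :: "real^'n^'n"
    using that by (simp add: c_def)
  have "ones_mat = H ** (L + ones_mat) ** ones_mat" by (simp add: inv)
  also have "\<dots> = real CARD('n) *\<^sub>R (H ** ones_mat)"
    by (simp add: matrix_mul_assoc[symmetric] matrix_add_rdistrib LJ ones_mat_mult_ones_mat
        matrix_scalar_ac scalar_matrix_assoc)
  finally show HJ: "H ** ones_mat = c *\<^sub>R ones_mat"
    by (rule unscale)
  have "ones_mat = ones_mat ** ((L + ones_mat) ** H)" by (simp add: inv')
  also have "\<dots> = real CARD('n) *\<^sub>R (ones_mat ** H)"
    by (simp add: matrix_mul_assoc matrix_add_ldistrib JL ones_mat_mult_ones_mat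
        scalar_matrix_assoc matrix_scalar_ac)
  finally show JH: "ones_mat ** H = c *\<^sub>R ones_mat"
    by (rule unscale)
  show "H ** L = mat 1 - c *\<^sub>R ones_mat"
    using inv HJ by (simp add: matrix_add_ldistrib eq_diff_eq)
  show "L ** H = mat 1 - c *\<^sub>R ones_mat"
    using inv' JH by (simp add: matrix_add_rdistrib eq_diff_eq)
qed

lemma moore_penrose_unique:
  fixes A X Y :: "real^'n^'n"
  assumes X: "A ** X ** A = A" "X ** A ** X = X" "transpose (A ** X) = A ** X"
      "transpose (X ** A) = X ** A"
    and Y: "A ** Y ** A = A" "Y ** A ** Y = Y" "transpose (A ** Y) = A ** Y"
      "transpose (Y ** A) = Y ** A"
  shows "X = Y"
proof -
  have "X = X ** transpose (A ** X)" using X(2,3) by (simp add: matrix_mul_assoc)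
  also have "\<dots> = X ** transpose (A ** Y ** A ** X)" by (simp add: Y(1))
  also have "\<dots> = X ** (A ** X) ** (A ** Y)"
    using X(3) Y(3) by (simp add: matrix_transpose_mul matrix_mul_assoc)
  also have "\<dots> = X ** A ** Y" using X(2) by (simp add: matrix_mul_assoc)
  finally have XAY: "X = X ** A ** Y" .
  have "Y = transpose (Y ** A) ** Y" using Y(2,4) by simp
  also have "\<dots> = transpose (Y ** A ** X ** A) ** Y"
    using X(1) by (simp add: matrix_mul_assoc[symmetric])
  also have "\<dots> = (X ** A) ** (Y ** A) ** Y"
    using X(4) Y(4) by (simp add: matrix_transpose_mul matrix_mul_assoc)
  also have "\<dots> = X ** A ** Y" using Y(2) by (simp add: matrix_mul_assoc[symmetric])
  finally show ?thesis using XAY by simp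
qed

lemma moore_penroseI:
  fixes A X :: "real^'n^'n"
  assumes "A ** X ** A = A" "X ** A ** X = X" "transpose (A ** X) = A ** X"
    "transpose (X ** A) = X ** A"
  shows "moore_penrose A = X"
  unfolding moore_penrose_def
proof (rule the_equality)
  fix Y
  assume "A ** Y ** A = A \<and> Y ** A ** Y = Y \<and> transpose (A ** Y) = A ** Y \<and>
    transpose (Y ** A) = Y ** A"
  then show "Y = X"
    using moore_penrose_unique[OF assms] by blast
qed (use assms in blast)

lemma moore_penrose_eq_inverse_plus_ones_mat:
  fixes L H :: "real^'n^'n"
  defines "c \<equiv> 1 / real CARD('n)"
  assumes LJ: "L ** ones_mat = 0" and JL: "ones_mat ** L = 0"
    and inv: "H ** (L + ones_mat) = mat 1"
  shows "moore_penrose L = H - (c * c) *\<^sub>R ones_mat"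
proof (rule moore_penroseI)
  let ?M = "H - (c * c) *\<^sub>R ones_mat" and ?P = "mat 1 - c *\<^sub>R ones_mat :: real^'n^'n"
  note H = inverse_plus_ones_mat[OF LJ JL inv, folded c_def]
  have L_M: "L ** ?M = ?P"
    by (simp add: matrix_diff_ldistrib matrix_scalar_ac scalar_matrix_assoc[symmetric] LJ H)
  have M_L: "?M ** L = ?P"
    by (simp add: matrix_diff_rdistrib scalar_matrix_assoc[symmetric] JL H)
  have P_L: "?P ** L = L"
    by (simp add: matrix_diff_rdistrib scalar_matrix_assoc[symmetric] JL)
  have "c * c * real CARD('n) = c" by (simp add: c_def)
  then have J_M: "ones_mat ** ?M = 0"
    by (simp add: matrix_diff_ldistrib matrix_scalar_ac scalar_matrix_assoc[symmetric]
        ones_mat_mult_ones_mat H)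
  have P_M: "?P ** ?M = ?M"
    by (simp only: matrix_diff_rdistrib scalar_matrix_assoc[symmetric] J_M) simp
  have P_sym: "transpose ?P = ?P"
    by (simp add: vec_eq_iff transpose_def mat_def ones_mat_def)
  show "L ** ?M ** L = L" by (simp only: L_M P_L)
  show "?M ** L ** ?M = ?M" by (simp only: M_L P_M)
  show "transpose (L ** ?M) = L ** ?M" and "transpose (?M ** L) = ?M ** L"
    by (simp_all only: L_M M_L P_sym)
qed

lemma inverse_on_unique:
  assumes "finite S" and N1: "is_inverse_on S M N1" and N2: "is_inverse_on S M N2"
    and "\<forall>a b. a \<notin> S \<or> b \<notin> S \<longrightarrow> N1 a b = 0"
    and "\<forall>a b. a \<notin> S \<or> b \<notin> S \<longrightarrow> N2 a b = 0"
  shows "N1 = N2"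
proof (intro ext)
  fix a b
  show "N1 a b = N2 a b"
  proof (cases "a \<in> S \<and> b \<in> S")
    case True
    have "N1 a b = (\<Sum>k\<in>S. N1 a k * (if k = b then 1 else 0))"
      using True \<open>finite S\<close> by (simp add: if_distrib sum.delta' cong: if_cong)
    also have "\<dots> = (\<Sum>k\<in>S. N1 a k * (\<Sum>l\<in>S. M k l * N2 l b))"
      using N2 True unfolding is_inverse_on_def by (intro sum.cong refl) auto
    also have "\<dots> = (\<Sum>l\<in>S. (\<Sum>k\<in>S. N1 a k * M k l) * N2 l b)"
      by (simp add: sum_distrib_left sum_distrib_right mult.assoc) (rule sum.swap)
    also have "\<dots> = (\<Sum>l\<in>S. (if a = l then 1 else 0) * N2 l b)"
      using N1 True unfolding is_inverse_on_def by (intro sum.cong refl) auto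
    also have "\<dots> = (\<Sum>l\<in>S. if a = l then N2 l b else 0)"
      by (intro sum.cong) auto
    also have "\<dots> = N2 a b" using True \<open>finite S\<close> by simp
    finally show ?thesis .
  qed (use assms in auto)
qed

lemma inverse_onI:
  assumes "finite S" "is_inverse_on S M N" "\<forall>a b. a \<notin> S \<or> b \<notin> S \<longrightarrow> N a b = 0"
  shows "inverse_on S M = N"
  unfolding inverse_on_def
proof (rule the_equality)
  fix N'
  assume "is_inverse_on S M N' \<and> (\<forall>a b. a \<notin> S \<or> b \<notin> S \<longrightarrow> N' a b = 0)"
  then show "N' = N"
    using inverse_on_unique[OF assms(1) _ assms(2) _ assms(3)] by blast
qed (use assms in blast)

lemma principal_sub_inverse_eq_inverse_plus_ones_mat:
  fixes L H :: "real^'n^'n"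
  assumes LJ: "L ** ones_mat = 0" and JL: "ones_mat ** L = 0"
    and inv: "H ** (L + ones_mat) = mat 1"
  shows "principal_sub_inverse L t =
    (\<lambda>a b. if a \<noteq> t \<and> b \<noteq> t then H$a$b - H$t$b - H$a$t + H$t$t else 0)"
    (is "_ = ?N")
  unfolding principal_sub_inverse_def
proof (rule inverse_onI)
  define c where "c = 1 / real CARD('n)"
  note H = inverse_plus_ones_mat[OF LJ JL inv, folded c_def]
  have row: "(\<Sum>k\<in>UNIV. L$a$k) = 0" and col: "(\<Sum>k\<in>UNIV. L$k$b) = 0" for a b
    using LJ JL by (simp_all add: mult_ones_mat_eq_0_iff ones_mat_mult_eq_0_iff)
  have LH: "(\<Sum>k\<in>UNIV. L$a$k * H$k$b) = (if a = b then 1 else 0) - c"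
    and HL: "(\<Sum>k\<in>UNIV. H$a$k * L$k$b) = (if a = b then 1 else 0) - c" for a b
    using H(3,4)[THEN arg_cong[where f="\<lambda>M. M$a$b"]]
    by (simp_all add: matrix_matrix_mult_def mat_def ones_mat_def)
  show "is_inverse_on (UNIV - {t}) (principal_submatrix L t) ?N"
    unfolding is_inverse_on_def
  proof (intro ballI conjI)
    fix a b assume "a \<in> UNIV - {t}" "b \<in> UNIV - {t}"
    then have a: "a \<noteq> t" and b: "b \<noteq> t" by auto
    have "(\<Sum>k\<in>UNIV - {t}. principal_submatrix L t a k * ?N k b) =
        (\<Sum>k\<in>UNIV - {t}. L$a$k * (H$k$b - H$t$b - H$k$t + H$t$t))"
      using a b by (intro sum.cong) (auto simp: principal_submatrix_def)
    also have "\<dots> = (\<Sum>k\<in>UNIV. L$a$k * (H$k$b - H$t$b - H$k$t + H$t$t))"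
      by (simp add: sum_diff1)
    also have "\<dots> = (\<Sum>k\<in>UNIV. L$a$k * H$k$b) - H$t$b * (\<Sum>k\<in>UNIV. L$a$k)
        - (\<Sum>k\<in>UNIV. L$a$k * H$k$t) + H$t$t * (\<Sum>k\<in>UNIV. L$a$k)"
      by (simp add: algebra_simps sum.distrib sum_subtractf sum_distrib_left)
    finally show "(\<Sum>k\<in>UNIV - {t}. principal_submatrix L t a k * ?N k b) =
        (if a = b then 1 else 0)"
      using a by (simp add: LH row)
    have "(\<Sum>k\<in>UNIV - {t}. ?N a k * principal_submatrix L t k b) =
        (\<Sum>k\<in>UNIV - {t}. (H$a$k - H$t$k - H$a$t + H$t$t) * L$k$b)"
      using a b by (intro sum.cong) (auto simp: principal_submatrix_def)
    also have "\<dots> = (\<Sum>k\<in>UNIV. (H$a$k - H$t$k - H$a$t + H$t$t) * L$k$b)"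
      by (simp add: sum_diff1)
    also have "\<dots> = (\<Sum>k\<in>UNIV. H$a$k * L$k$b) - (\<Sum>k\<in>UNIV. H$t$k * L$k$b)
        - H$a$t * (\<Sum>k\<in>UNIV. L$k$b) + H$t$t * (\<Sum>k\<in>UNIV. L$k$b)"
      by (simp add: algebra_simps sum.distrib sum_subtractf sum_distrib_left)
    finally show "(\<Sum>k\<in>UNIV - {t}. ?N a k * principal_submatrix L t k b) =
        (if a = b then 1 else 0)"
      using b by (simp add: HL col)
  qed
qed auto

lemma sum_principal_sub_inverse_row:
  fixes L H :: "real^'n^'n"
  assumes LJ: "L ** ones_mat = 0" and JL: "ones_mat ** L = 0"
    and inv: "H ** (L + ones_mat) = mat 1" and "a \<noteq> t"
  shows "(\<Sum>k\<in>UNIV - {t}. principal_sub_inverse L t a k) = real CARD('n) * (H$t$t - H$a$t)"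
proof -
  have row_H: "(\<Sum>k\<in>UNIV. H$b$k) = 1 / real CARD('n)" for b
    using inverse_plus_ones_mat(1)[OF LJ JL inv, THEN arg_cong[where f="\<lambda>M. M$b$b"]]
    by (simp add: matrix_matrix_mult_def ones_mat_def)
  have "(\<Sum>k\<in>UNIV - {t}. principal_sub_inverse L t a k) =
      (\<Sum>k\<in>UNIV - {t}. H$a$k - H$t$k - H$a$t + H$t$t)"
    using \<open>a \<noteq> t\<close>
    by (intro sum.cong) (auto simp: principal_sub_inverse_eq_inverse_plus_ones_mat[OF LJ JL inv])
  also have "\<dots> = (\<Sum>k\<in>UNIV. H$a$k - H$t$k - H$a$t + H$t$t)"
    by (simp add: sum_diff1)
  also have "\<dots> = real CARD('n) * (H$t$t - H$a$t)"
    by (simp add: sum.distrib sum_subtractf row_H algebra_simps)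
  finally show ?thesis .
qed

lemma inner_axis_diff_matrix_vector_mult:
  fixes M :: "real^'n^'n"
  shows "(axis i 1 - axis j 1) \<bullet> (M *v (axis i 1 - axis j 1)) = M$i$i - M$i$j - M$j$i + M$j$j"
  by (simp add: inner_diff_left inner_axis' matrix_vector_mult_diff_distrib
      matrix_vector_mult_basis column_def)

lemma wadj_commute: "wadj E ends w a b = wadj E ends w b a"
  unfolding wadj_def by (simp add: insert_commute)

lemma wadj_nonneg: "\<forall>e\<in>E. w e > 0 \<Longrightarrow> wadj E ends w a b \<ge> 0"
  unfolding wadj_def by (intro sum_nonneg) auto

lemma wadj_pos:
  assumes "finite E" "\<forall>e\<in>E. w e > 0" "e \<in> E" "ends e = {a, b}"
  shows "wadj E ends w a b > 0"
proof -
  have "w e \<le> wadj E ends w a b"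
    unfolding wadj_def using assms by (intro member_le_sum) auto
  then show ?thesis using assms by force
qed

lemma laplacian_entry:
  "laplacian E ends w $ a $ b =
    (if a = b then (\<Sum>k\<in>UNIV. wadj E ends w a k) else 0) - wadj E ends w a b"
  unfolding laplacian_def by simp

lemma laplacian_commute: "laplacian E ends w $ a $ b = laplacian E ends w $ b $ a"
  by (simp add: laplacian_entry wadj_commute)

lemma laplacian_mult_ones_mat:
  "laplacian E ends w ** ones_mat = 0" "ones_mat ** laplacian E ends w = 0"
proof -
  have row: "(\<Sum>b\<in>UNIV. laplacian E ends w $ a $ b) = 0" for a
    by (simp add: laplacian_entry sum_subtractf)
  then show "laplacian E ends w ** ones_mat = 0"
    by (simp add: mult_ones_mat_eq_0_iff)
  show "ones_mat ** laplacian E ends w = 0"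
    using row by (simp add: ones_mat_mult_eq_0_iff laplacian_commute)
qed

lemma laplacian_mult_vec:
  "(laplacian E ends w *v x) $ a = (\<Sum>b\<in>UNIV. wadj E ends w a b * (x$a - x$b))"
proof -
  let ?A = "wadj E ends w"
  have "(laplacian E ends w *v x) $ a =
      (\<Sum>b\<in>UNIV. (if a = b then (\<Sum>k\<in>UNIV. ?A a k) else 0) * x$b) - (\<Sum>b\<in>UNIV. ?A a b * x$b)"
    by (simp add: matrix_vector_mult_def laplacian_entry left_diff_distrib sum_subtractf)
  also have "\<dots> = (\<Sum>b\<in>UNIV. if b = a then (\<Sum>k\<in>UNIV. ?A a k) * x$a else 0)
      - (\<Sum>b\<in>UNIV. ?A a b * x$b)"
    by (intro arg_cong2[where f=minus] sum.cong) auto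
  also have "\<dots> = (\<Sum>b\<in>UNIV. ?A a b * x$a) - (\<Sum>b\<in>UNIV. ?A a b * x$b)"
    by (simp add: sum_distrib_right)
  finally show ?thesis by (simp add: right_diff_distrib sum_subtractf)
qed

lemma laplacian_quadratic_form:
  "2 * (x \<bullet> (laplacian E ends w *v x)) =
    (\<Sum>a\<in>UNIV. \<Sum>b\<in>UNIV. wadj E ends w a b * (x$a - x$b)^2)"
proof -
  let ?A = "wadj E ends w"
  have form: "x \<bullet> (laplacian E ends w *v x) = (\<Sum>a\<in>UNIV. \<Sum>b\<in>UNIV. ?A a b * x$a * (x$a - x$b))"
    by (simp add: inner_vec_def laplacian_mult_vec sum_distrib_left mult_ac)
  also have "\<dots> = (\<Sum>a\<in>UNIV. \<Sum>b\<in>UNIV. ?A a b * x$b * (x$b - x$a))"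
    by (subst sum.swap) (simp add: wadj_commute)
  finally have "2 * (x \<bullet> (laplacian E ends w *v x)) =
      (\<Sum>a\<in>UNIV. \<Sum>b\<in>UNIV. ?A a b * x$a * (x$a - x$b) + ?A a b * x$b * (x$b - x$a))"
    unfolding form by (simp add: sum.distrib)
  also have "\<dots> = (\<Sum>a\<in>UNIV. \<Sum>b\<in>UNIV. ?A a b * (x$a - x$b)^2)"
    by (simp add: power2_eq_square algebra_simps)
  finally show ?thesis .
qed

lemma laplacian_kernel_constant:
  assumes "finite E" and pos: "\<forall>e\<in>E. w e > 0" and "mg_connected E ends"
    and ker: "laplacian E ends w *v x = 0"
  shows "x$u = x$v"
proof -
  let ?A = "wadj E ends w"
  have nonneg: "?A a b * (x$a - x$b)^2 \<ge> 0" for a b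
    by (simp add: wadj_nonneg[OF pos])
  have "(\<Sum>a\<in>UNIV. \<Sum>b\<in>UNIV. ?A a b * (x$a - x$b)^2) = 0"
    using laplacian_quadratic_form[of x E ends w] ker by simp
  then have "(\<Sum>b\<in>UNIV. ?A a b * (x$a - x$b)^2) = 0" for a
    using sum_nonneg_eq_0_iff[of UNIV "\<lambda>a. \<Sum>b\<in>UNIV. ?A a b * (x$a - x$b)^2"]
    by (simp add: sum_nonneg nonneg)
  then have zero: "?A a b * (x$a - x$b)^2 = 0" for a b
    using sum_nonneg_eq_0_iff[of UNIV "\<lambda>b. ?A a b * (x$a - x$b)^2"] by (simp add: nonneg)
  have edge: "x$a = x$b" if "(a, b) \<in> {(a, b). \<exists>e\<in>E. ends e = {a, b}}" for a b
  proof -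
    from that obtain e where "e \<in> E" "ends e = {a, b}" by auto
    then have "?A a b > 0" by (rule wadj_pos[OF \<open>finite E\<close> pos])
    with zero[of a b] show ?thesis by simp
  qed
  have "(u, v) \<in> {(a, b). \<exists>e\<in>E. ends e = {a, b}}\<^sup>*"
    using \<open>mg_connected E ends\<close> unfolding mg_connected_def by blast
  then show ?thesis
  proof (induction rule: rtrancl_induct)
    case (step b c)
    then show ?case using edge[of b c] by simp
  qed simp
qed

lemma laplacian_plus_ones_mat_invertible:
  fixes ends :: "'e \<Rightarrow> 'v::finite set"
  assumes "finite E" and "\<forall>e\<in>E. w e > 0" and "mg_connected E ends"
  shows "\<exists>H. H ** (laplacian E ends w + ones_mat) = mat 1"
  unfolding matrix_left_invertible_ker
proof (intro allI impI)
  fix y :: "real^'v"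
  let ?L = "laplacian E ends w"
  assume y: "(?L + ones_mat) *v y = 0"
  have ones_mult: "(ones_mat *v z) $ a = (\<Sum>b\<in>UNIV. z$b)" for z :: "real^'v" and a
    by (simp add: matrix_vector_mult_def ones_mat_def)
  have "ones_mat *v ((?L + ones_mat) *v y) = real CARD('v) *\<^sub>R ones_mat *v y"
    by (simp add: matrix_vector_mul_assoc matrix_add_ldistrib laplacian_mult_ones_mat
        ones_mat_mult_ones_mat)
  then have sum_y: "(\<Sum>b\<in>UNIV. y$b) = 0"
    using y by (simp add: vec_eq_iff matrix_vector_mult_def ones_mat_def sum_distrib_left[symmetric])
  then have "?L *v y = 0"
    using y by (simp add: matrix_vector_mult_add_rdistrib vec_eq_iff ones_mult)
  then have const: "y$a = y$b" for a b
    using laplacian_kernel_constant assms by blast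
  have "(\<Sum>b\<in>UNIV. y$b) = (\<Sum>b::'v\<in>UNIV. y$a)" for a
    by (intro sum.cong refl) (rule const)
  then have "real CARD('v) * y$a = 0" for a
    using sum_y by simp
  then show "y = 0" by (simp add: vec_eq_iff)
qed

theorem corollary8:
  fixes E :: "'e set" and ends :: "'e \<Rightarrow> 'v::finite set" and w :: "'e \<Rightarrow> real"
  assumes "is_weighted_multigraph E ends w"
    and "\<forall>e\<in>E. w e > 0"
    and "mg_connected E ends"
    and "CARD('v) \<ge> 2"
    and "i \<noteq> j"
  shows "resistance_distance E ends w i j =
    (1 / real CARD('v)) *
      ((\<Sum>k\<in>UNIV - {j}. principal_sub_inverse (laplacian E ends w) j i k)
     + (\<Sum>k\<in>UNIV - {i}. principal_sub_inverse (laplacian E ends w) i j k))"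
proof -
  let ?L = "laplacian E ends w"
  have "finite E" using assms(1) unfolding is_weighted_multigraph_def by simp
  then obtain H where H: "H ** (?L + ones_mat) = mat 1"
    using laplacian_plus_ones_mat_invertible assms(2,3) by blast
  note zero_sums = laplacian_mult_ones_mat
  have resistance: "resistance_distance E ends w i j = H$i$i - H$i$j - H$j$i + H$j$j"
    unfolding resistance_distance_def Let_def moore_penrose_eq_inverse_plus_ones_mat[OF zero_sums H]
      inner_axis_diff_matrix_vector_mult
    by (simp add: ones_mat_def)
  show ?thesis
    unfolding resistance sum_principal_sub_inverse_row[OF zero_sums H \<open>i \<noteq> j\<close>]
      sum_principal_sub_inverse_row[OF zero_sums H \<open>i \<noteq> j\<close>[symmetric]]
    by (simp add: field_simps)
qed

end
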